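(* Let $\Sigma$ be a non-orientable surface (possibly with boundary), let $D\subset\Sigma$ be a diagram of an oriented pseudo-classical knot in $\hat\Sigma=\Sigma\times[0,1]$, fix a labeling of its $2$-cabling $D^2$, and let $x$ be a crossing of $D$. (1) If $x$ is of type $1$, then each of the following transformations multiplies $\operatorname{sign}(x)$ by $-1$: (a) the crossing change operation at $x$; (b) reversing the orientation of $D$; (c) relabeling $D^2$. (2) If $x$ is of type $2$, then $\operatorname{sign}(x)$ is preserved under the crossing change operation at $x$, while relabeling $D^2$ and reversing the orientation of $D$ each multiply $\operatorname{sign}(x)$ by $-1$.
   Context: $\hat\Sigma=\Sigma\times[0,1]$ is the non-orientable $3$-manifold with fixed product structure; knots in it are represented by diagrams on $\Sigma$ (projections with over/under information at double points). A knot $K\subset\hat\Sigma$ is pseudo-classical if it is an orientation-preserving loop in $\hat\Sigma$ (equivalently its regular neighbourhood is a solid torus); then its diagram $D$ is an orientation-preserving loop in $\Sigma$. The $2$-cabling $D^2$ is the diagram obtained by replacing $D$ by two parallel copies (a doubled line) preserving over/under information at all crossings; for pseudo-classical $K$ it has two components. A labeling of $D^2$ is a choice of calling one component the "right" one $R(D)$ and the other the "left" one $L(D)$ (this is only a naming, since $\Sigma$ has no orientation); relabeling swaps the names. Both components are oriented consistently with $D$. Each crossing $x$ of $D$ gives a pattern of $4$ crossings of $D^2$; the input crossing $\mathrm{In}(x)$ is the crossing of the pattern at which both strands of $D^2$ passing through it enter the pattern (the first crossing of the pattern on both strands, traversed in the positive direction); the output crossing is defined analogously with "leave". The sign of $x$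 is $\operatorname{sign}(x)=1$ if $R(D)$ goes over $L(D)$ at $\mathrm{In}(x)$; $-1$ if $L(D)$ goes over $R(D)$ at $\mathrm{In}(x)$; $i$ if $R(D)$ goes over itself at $\mathrm{In}(x)$; $-i$ if $L(D)$ goes over itself at $\mathrm{In}(x)$ ($i$ the imaginary unit). The crossing $x$ is of type $1$ if $\mathrm{In}(x)$ is an intersection of two distinct components of $D^2$ (i.e. $\operatorname{sign}(x)=\pm1$), and of type $2$ otherwise ($\operatorname{sign}(x)=\pm i$). The crossing change at $x$ swaps over- and under-branches at $x$ leaving the rest of the diagram unchanged. *)

theory Defs
  imports Complex_Main
begin

text \<open>Local model of a crossing x of an oriented pseudo-classical diagram D on a
(non-orientable) surface, together with the 2-cabling D^2 and a labeling of it.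
We work in a small disk chart around x, identified with the complex plane
(with an arbitrarily chosen local orientation; no global orientation exists).
The two branches of D through x are straight lines through 0 with direction
vectors dir1, dir2 (the orientation of D), transversal to each other.
The doubled line of branch k consists of the two parallel strands
  t \<mapsto> o + t * dir_k  with offset o = +/- width * i * dir_k.
The labeling of D^2 is recorded by giving, for each branch, the offset of the
strand belonging to the right component R(D); the other strand belongs to L(D).
over1 says whether branch 1 is the over-branch at x (then both strands of
branch 1 go over both strands of branch 2 in the pattern of 4 crossings).\<close>

record xdata =
  dir1 :: complex
  dir2 :: complex
  width :: real
  over1 :: bool
  roff1 :: complex
  roff2 :: complex

definition offs1 :: "xdata \<Rightarrow> complex set" where
  "offs1 d = {complex_of_real (width d) * \<i> * dir1 d, - (complex_of_real (width d) * \<i> * dir1 d)}"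

definition offs2 :: "xdata \<Rightarrow> complex set" where
  "offs2 d = {complex_of_real (width d) * \<i> * dir2 d, - (complex_of_real (width d) * \<i> * dir2 d)}"

definition valid :: "xdata \<Rightarrow> bool" where
  "valid d \<longleftrightarrow> width d > 0 \<and> Im (cnj (dir1 d) * dir2 d) \<noteq> 0
     \<and> roff1 d \<in> offs1 d \<and> roff2 d \<in> offs2 d"

definition meets :: "xdata \<Rightarrow> complex \<Rightarrow> complex \<Rightarrow> real \<Rightarrow> real \<Rightarrow> bool" where
  "meets d o1 o2 t1 t2 \<longleftrightarrow> o1 + complex_of_real t1 * dir1 d = o2 + complex_of_real t2 * dir2 d"

text \<open>The input crossing In(x): the crossing of the pattern which is the first
crossing of the pattern on both strands passing through it (traversed positively).\<close>
definition is_input :: "xdata \<Rightarrow> complex \<Rightarrow> complex \<Rightarrow> bool" where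
  "is_input d o1 o2 \<longleftrightarrow> o1 \<in> offs1 d \<and> o2 \<in> offs2 d \<and>
     (\<exists>t1 t2. meets d o1 o2 t1 t2 \<and>
        (\<forall>o2'\<in>offs2 d. \<forall>s1 s2. meets d o1 o2' s1 s2 \<longrightarrow> t1 \<le> s1) \<and>
        (\<forall>o1'\<in>offs1 d. \<forall>s1 s2. meets d o1' o2 s1 s2 \<longrightarrow> t2 \<le> s2))"

definition In :: "xdata \<Rightarrow> complex \<times> complex" where
  "In d = (THE p. is_input d (fst p) (snd p))"

text \<open>Components at In(x): True means R(D), False means L(D).\<close>
definition in_comps :: "xdata \<Rightarrow> bool \<times> bool" where
  "in_comps d = (fst (In d) = roff1 d, snd (In d) = roff2 d)"

definition xsign :: "xdata \<Rightarrow> complex" where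
  "xsign d = (let c1 = fst (in_comps d); c2 = snd (in_comps d);
                  co = (if over1 d then c1 else c2); cu = (if over1 d then c2 else c1)
              in if co \<and> \<not> cu then 1
                 else if \<not> co \<and> cu then -1
                 else if co then \<i> else - \<i>)"

definition type1 :: "xdata \<Rightarrow> bool" where
  "type1 d \<longleftrightarrow> fst (in_comps d) \<noteq> snd (in_comps d)"

definition type2 :: "xdata \<Rightarrow> bool" where
  "type2 d \<longleftrightarrow> fst (in_comps d) = snd (in_comps d)"

definition crossing_change :: "xdata \<Rightarrow> xdata" where
  "crossing_change d = d\<lparr>over1 := \<not> over1 d\<rparr>"

text \<open>Reversing the orientation of D: both branches are traversed backwards;
the strands (as point sets) and their component labels are unchanged.\<close>
definition reverse :: "xdata \<Rightarrow> xdata" where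
  "reverse d = d\<lparr>dir1 := - dir1 d, dir2 := - dir2 d\<rparr>"

text \<open>Relabeling D^2: R and L swap, i.e. on each branch the other strand is R.\<close>
definition relabel :: "xdata \<Rightarrow> xdata" where
  "relabel d = d\<lparr>roff1 := - roff1 d, roff2 := - roff2 d\<rparr>"

end

theory Submission
  imports Defs
begin

text \<open>Solving o1 + t1 dir1 = o2 + t2 dir2 by Cramer's rule (with the
cross product Im (cnj u * v)) shows that the meeting parameter on a strand depends affinely
on the offset of the other strand, so the input crossing is the pair of offsets
(-\<sigma> w i dir1, \<sigma> w i dir2), where \<sigma> is the sign of the cross product of dir1 and dir2.
In particular In(x) does not see the over/under data or the labeling, and reversing both
directions negates both offsets while keeping \<sigma>. So a crossing change only swaps the
roles of the over and under strand at In(x), whereas relabeling and reversal both swap the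
R/L membership of both strands at In(x); the sign rules follow by inspecting the cases.\<close>

definition cross :: "complex \<Rightarrow> complex \<Rightarrow> real" where
  "cross u v = Im (cnj u * v)"

lemma cross_self [simp]: "cross u u = 0"
  by (simp add: cross_def)

lemma cross_commute: "cross v u = - cross u v"
  by (simp add: cross_def algebra_simps)

lemma cross_diff_left: "cross (u - v) w = cross u w - cross v w"
  by (simp add: cross_def algebra_simps)

lemma cross_of_real_mult_left [simp]: "cross (of_real s * u) v = s * cross u v"
  by (simp add: cross_def algebra_simps)

lemma cross_neg_left [simp]: "cross (- u) v = - cross u v"
  by (simp add: cross_def)

lemma cross_expansion: "of_real (cross a b) * z = of_real (cross z b) * a - of_real (cross z a) * b"
  by (simp add: cross_def complex_eq_iff algebra_simps)

lemma real_coordinates_unique: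
  assumes "cross a b \<noteq> 0"
  shows "of_real t1 * a - of_real t2 * b = z \<longleftrightarrow> t1 = cross z b / cross a b \<and> t2 = cross z a / cross a b"
proof
  assume "of_real t1 * a - of_real t2 * b = z"
  then have "cross z b = t1 * cross a b" "cross z a = t2 * cross a b"
    by (auto simp: cross_diff_left cross_commute[of a b])
  then show "t1 = cross z b / cross a b \<and> t2 = cross z a / cross a b"
    using assms by simp
next
  assume "t1 = cross z b / cross a b \<and> t2 = cross z a / cross a b"
  then have "cross a b * t1 = cross z b" "cross a b * t2 = cross z a"
    using assms by simp_all
  then have "of_real (cross a b) * (of_real t1 * a - of_real t2 * b) = of_real (cross a b) * z"
    by (simp add: cross_expansion[of a b z] right_diff_distrib flip: mult.assoc of_real_mult)
  then show "of_real t1 * a - of_real t2 * b = z"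
    using assms by simp
qed

lemma cross_offset: "cross (of_real w * \<i> * u) u = - w * (cmod u)\<^sup>2"
  by (simp add: cross_def cmod_power2 algebra_simps) (simp add: power2_eq_square)

lemma meets_iff:
  assumes "cross (dir1 d) (dir2 d) \<noteq> 0"
  shows "meets d o1 o2 t1 t2 \<longleftrightarrow>
    t1 = cross (o2 - o1) (dir2 d) / cross (dir1 d) (dir2 d) \<and>
    t2 = cross (o2 - o1) (dir1 d) / cross (dir1 d) (dir2 d)"
proof -
  have "meets d o1 o2 t1 t2 \<longleftrightarrow> of_real t1 * dir1 d - of_real t2 * dir2 d = o2 - o1"
    by (auto simp: meets_def algebra_simps)
  then show ?thesis
    using real_coordinates_unique[OF assms] by simp
qed

lemma is_input_iff:
  assumes "cross (dir1 d) (dir2 d) \<noteq> 0"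
  defines "c \<equiv> cross (dir1 d) (dir2 d)"
  shows "is_input d o1 o2 \<longleftrightarrow> o1 \<in> offs1 d \<and> o2 \<in> offs2 d \<and>
    (\<forall>o2'\<in>offs2 d. cross o2 (dir2 d) / c \<le> cross o2' (dir2 d) / c) \<and>
    (\<forall>o1'\<in>offs1 d. cross o1' (dir1 d) / c \<le> cross o1 (dir1 d) / c)"
  using assms by (simp add: is_input_def meets_iff cross_diff_left diff_divide_distrib)

lemma sign_minimal_iff:
  fixes k s :: real
  assumes "k \<noteq> 0" "s \<in> {1, -1}"
  shows "(\<forall>s'\<in>{1, -1}. s * k \<le> s' * k) \<longleftrightarrow> s = - sgn k"
  using assms by (cases "k > 0") (auto simp: sgn_if)

lemma sign_maximal_iff:
  fixes k s :: real
  assumes "k \<noteq> 0" "s \<in> {1, -1}"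
  shows "(\<forall>s'\<in>{1, -1}. s' * k \<le> s * k) \<longleftrightarrow> s = sgn k"
  using assms by (cases "k > 0") (auto simp: sgn_if)

definition offset1 :: "xdata \<Rightarrow> complex" where
  "offset1 d = of_real (width d) * \<i> * dir1 d"

definition offset2 :: "xdata \<Rightarrow> complex" where
  "offset2 d = of_real (width d) * \<i> * dir2 d"

lemma offs1_eq: "offs1 d = (\<lambda>s. of_real s * offset1 d) ` {1, -1}"
  by (simp add: offs1_def offset1_def)

lemma offs2_eq: "offs2 d = (\<lambda>s. of_real s * offset2 d) ` {1, -1}"
  by (simp add: offs2_def offset2_def)

lemma valid_cross_nonzero: "valid d \<Longrightarrow> cross (dir1 d) (dir2 d) \<noteq> 0"
  by (simp add: valid_def cross_def)

definition orientation :: "xdata \<Rightarrow> real" where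
  "orientation d = sgn (cross (dir1 d) (dir2 d))"

lemma orientation_cases: "valid d \<Longrightarrow> orientation d \<in> {1, -1}"
  using valid_cross_nonzero by (auto simp: orientation_def sgn_if)

lemma is_input_offsets_iff:
  assumes "valid d" "s1 \<in> {1, -1}" "s2 \<in> {1, -1}"
  shows "is_input d (of_real s1 * offset1 d) (of_real s2 * offset2 d) \<longleftrightarrow>
    s1 = - orientation d \<and> s2 = orientation d"
proof -
  define c where "c = cross (dir1 d) (dir2 d)"
  have "c \<noteq> 0" "width d > 0" "dir1 d \<noteq> 0" "dir2 d \<noteq> 0"
    using assms(1) by (auto simp: c_def valid_def cross_def)
  define k1 where "k1 = cross (offset1 d) (dir1 d) / c"
  define k2 where "k2 = cross (offset2 d) (dir2 d) / c"
  have k: "k1 \<noteq> 0" "sgn k1 = - orientation d" "k2 \<noteq> 0" "sgn k2 = - orientation d"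
    using \<open>c \<noteq> 0\<close> \<open>width d > 0\<close> \<open>dir1 d \<noteq> 0\<close> \<open>dir2 d \<noteq> 0\<close>
    by (simp_all add: k1_def k2_def c_def orientation_def offset1_def offset2_def cross_offset
        sgn_mult)
  have "of_real s1 * offset1 d \<in> offs1 d" "of_real s2 * offset2 d \<in> offs2 d"
    using assms(2,3) by (auto simp: offs1_eq offs2_eq)
  then have "is_input d (of_real s1 * offset1 d) (of_real s2 * offset2 d) \<longleftrightarrow>
      (\<forall>s'\<in>{1, -1}. s2 * k2 \<le> s' * k2) \<and> (\<forall>s'\<in>{1, -1}. s' * k1 \<le> s1 * k1)"
    using valid_cross_nonzero[OF assms(1)]
    by (subst is_input_iff) (simp_all add: offs1_eq offs2_eq k1_def k2_def c_def)
  also have "\<dots> \<longleftrightarrow> s1 = - orientation d \<and> s2 = orientation d"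
    using sign_minimal_iff[OF k(3) assms(3)] sign_maximal_iff[OF k(1) assms(2)] k by auto
  finally show ?thesis .
qed

lemma In_eq:
  assumes "valid d"
  shows "In d = (of_real (- orientation d) * offset1 d, of_real (orientation d) * offset2 d)"
  unfolding In_def
proof (rule the_equality)
  show "is_input d (fst (of_real (- orientation d) * offset1 d, of_real (orientation d) * offset2 d))
      (snd (of_real (- orientation d) * offset1 d, of_real (orientation d) * offset2 d))"
  proof -
    have "orientation d \<in> {1, -1}" "- orientation d \<in> {1, -1}"
      using orientation_cases[OF assms] by auto
    from is_input_offsets_iff[OF assms this(2,1)] show ?thesis
      by simp
  qed
next
  fix p
  assume input: "is_input d (fst p) (snd p)"
  then have "fst p \<in> offs1 d" "snd p \<in> offs2 d"
    by (simp_all add: is_input_def)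
  then obtain s1 s2 where s: "s1 \<in> {1, -1}" "s2 \<in> {1, -1}"
    and "fst p = of_real s1 * offset1 d" "snd p = of_real s2 * offset2 d"
    unfolding offs1_eq offs2_eq by blast
  then have p: "p = (of_real s1 * offset1 d, of_real s2 * offset2 d)"
    by (simp add: prod_eq_iff)
  show "p = (of_real (- orientation d) * offset1 d, of_real (orientation d) * offset2 d)"
    using input is_input_offsets_iff[OF assms s] by (simp add: p)
qed

lemma In_crossing_change: "In (crossing_change d) = In d"
  by (simp add: In_def is_input_def meets_def offs1_def offs2_def crossing_change_def)

lemma In_relabel: "In (relabel d) = In d"
  by (simp add: In_def is_input_def meets_def offs1_def offs2_def relabel_def)

lemma valid_reverse: "valid d \<Longrightarrow> valid (reverse d)"
  by (auto simp: valid_def reverse_def offs1_def offs2_def)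

lemma In_reverse:
  assumes "valid d"
  shows "In (reverse d) = map_prod uminus uminus (In d)"
proof -
  have "orientation (reverse d) = orientation d"
    "offset1 (reverse d) = - offset1 d" "offset2 (reverse d) = - offset2 d"
    by (simp_all add: reverse_def orientation_def cross_def offset1_def offset2_def)
  then show ?thesis
    by (simp add: In_eq assms valid_reverse)
qed

lemma In_mem_offs:
  assumes "valid d"
  shows "fst (In d) \<in> offs1 d" "snd (In d) \<in> offs2 d"
  using orientation_cases[OF assms] by (auto simp: In_eq[OF assms] offs1_eq offs2_eq)

lemma antipodal_eq_neg_iff:
  fixes a :: "'a :: ab_group_add"
  assumes "x \<in> {a, -a}" "y \<in> {a, -a}" "a \<noteq> -a"
  shows "x = - y \<longleftrightarrow> x \<noteq> y"
  using assms by auto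

lemma valid_offsets_antipodal:
  assumes "valid d"
  shows "offset1 d \<noteq> - offset1 d" "offset2 d \<noteq> - offset2 d"
  using assms by (auto simp: valid_def offset1_def offset2_def)

lemma in_comps_crossing_change: "in_comps (crossing_change d) = in_comps d"
  by (simp add: in_comps_def In_crossing_change) (simp add: crossing_change_def)

lemma in_comps_negated:
  assumes "valid d"
  shows "(fst (In d) = - roff1 d, snd (In d) = - roff2 d) = map_prod Not Not (in_comps d)"
proof -
  have "offs1 d = {offset1 d, - offset1 d}" "offs2 d = {offset2 d, - offset2 d}"
    by (simp_all add: offs1_def offs2_def offset1_def offset2_def)
  then have "fst (In d) \<in> {offset1 d, - offset1 d}" "roff1 d \<in> {offset1 d, - offset1 d}"
    "snd (In d) \<in> {offset2 d, - offset2 d}" "roff2 d \<in> {offset2 d, - offset2 d}"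
    using In_mem_offs[OF assms] assms by (simp_all add: valid_def)
  then have "fst (In d) = - roff1 d \<longleftrightarrow> fst (In d) \<noteq> roff1 d"
    "snd (In d) = - roff2 d \<longleftrightarrow> snd (In d) \<noteq> roff2 d"
    using antipodal_eq_neg_iff valid_offsets_antipodal[OF assms] by blast+
  then show ?thesis
    by (simp only: in_comps_def map_prod_simp)
qed

lemma in_comps_relabel:
  assumes "valid d"
  shows "in_comps (relabel d) = map_prod Not Not (in_comps d)"
proof -
  have "in_comps (relabel d) = (fst (In d) = - roff1 d, snd (In d) = - roff2 d)"
    by (simp add: in_comps_def In_relabel) (simp add: relabel_def)
  also have "\<dots> = map_prod Not Not (in_comps d)"
    by (rule in_comps_negated[OF assms])
  finally show ?thesis .
qed

lemma in_comps_reverse: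
  assumes "valid d"
  shows "in_comps (reverse d) = map_prod Not Not (in_comps d)"
proof -
  have "roff1 (reverse d) = roff1 d" "roff2 (reverse d) = roff2 d"
    by (simp_all add: reverse_def)
  then have "in_comps (reverse d) = (- fst (In d) = roff1 d, - snd (In d) = roff2 d)"
    by (simp add: in_comps_def In_reverse[OF assms])
  also have "\<dots> = (fst (In d) = - roff1 d, snd (In d) = - roff2 d)"
    by (auto simp: minus_equation_iff)
  also have "\<dots> = map_prod Not Not (in_comps d)"
    by (rule in_comps_negated[OF assms])
  finally show ?thesis .
qed

lemma xsign_crossing_change:
  "xsign (crossing_change d) = (if type1 d then - xsign d else xsign d)"
  using in_comps_crossing_change[of d]
  by (cases "in_comps d"; cases "over1 d") (auto simp: xsign_def type1_def crossing_change_def)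

lemma xsign_negated_comps:
  assumes "in_comps d' = map_prod Not Not (in_comps d)" "over1 d' = over1 d"
  shows "xsign d' = - xsign d"
  using assms by (cases "in_comps d"; cases "over1 d") (auto simp: xsign_def)

theorem lemma1:
  assumes "valid d"
  shows "(type1 d \<longrightarrow>
            xsign (crossing_change d) = - xsign d \<and>
            xsign (reverse d) = - xsign d \<and>
            xsign (relabel d) = - xsign d)
       \<and> (type2 d \<longrightarrow>
            xsign (crossing_change d) = xsign d \<and>
            xsign (relabel d) = - xsign d \<and>
            xsign (reverse d) = - xsign d)"
proof -
  have "xsign (reverse d) = - xsign d"
    by (rule xsign_negated_comps[OF in_comps_reverse[OF assms]]) (simp add: reverse_def)
  moreover have "xsign (relabel d) = - xsign d"
    by (rule xsign_negated_comps[OF in_comps_relabel[OF assms]]) (simp add: relabel_def)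
  moreover have "type2 d \<longleftrightarrow> \<not> type1 d"
    by (simp add: type1_def type2_def)
  ultimately show ?thesis
    by (simp add: xsign_crossing_change)
qed

end
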